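(* Consider two spiking neurons $\hat\sigma$ and $\tilde\sigma$ (same threshold $u_{th}$, reset $V_{reset}$, decay $\beta\in(0,1)$) with the same initial temporal input $\tilde h^0=\hat h^0$, receiving spatial input features $\hat x^t$ and $\tilde x^t$, $t=1,\dots,T$. Suppose $\hat u^T=\hat h^{T-1}+\hat x^T$ is a random variable following a $u_{th}$-Neighborhood-Finite Distribution, that $|\tilde x^t-\hat x^t|\le\epsilon$ for all $t=1,\dots,T$, and that $\hat\sigma^t(\hat x^t)=\tilde\sigma^t(\tilde x^t)$ for $t=1,\dots,T-1$. Then $P[\hat\sigma^T(\hat x^T)\neq\tilde\sigma^T(\tilde x^T)]$ has an upper bound proportional to $\frac{\epsilon}{1-\beta}$ (i.e. it is at most a constant multiple of $\frac{\epsilon}{1-\beta}$, the constant depending only on the distribution of $\hat u^T$).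
   Context: A LIF spiking neuron with firing threshold $u_{th}$, reset potential $V_{reset}$ and decay factor $\beta\in(0,1)$ receives spatial input features $x^1,x^2,\dots$ and evolves by $u^t=h^{t-1}+x^t$, $s^t=\mathrm{Hea}(u^t-u_{th})$, $h^t=V_{reset}s^t+\beta u^t(1-s^t)$, where $\mathrm{Hea}(y)=1$ if $y\ge0$ and $0$ otherwise; the output at timestep $t$ is written $\sigma^t(x^t)=s^t$ (it depends on earlier inputs through $h^{t-1}$). A probability density $p$ is an $m$-Neighborhood-Finite Distribution if there exists $\epsilon>0$ with $\sup_{x\in[m-\epsilon,m+\epsilon]}p(x)<+\infty$. *)

theory Defs
  imports "HOL-Probability.Probability"
begin

definition hea :: "real \<Rightarrow> real" where
  "hea y = (if y \<ge> 0 then 1 else 0)"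

text \<open>Temporal state h^t of a LIF neuron with threshold uth, reset vr, decay beta,
  initial temporal input h0 and spatial input sequence x (x t for t = 1,2,...).
  h^t = V_reset s^t + beta u^t (1 - s^t), u^t = h^(t-1) + x^t, s^t = Hea(u^t - uth).\<close>
fun lif_h :: "real \<Rightarrow> real \<Rightarrow> real \<Rightarrow> real \<Rightarrow> (nat \<Rightarrow> real) \<Rightarrow> nat \<Rightarrow> real" where
  "lif_h uth vr beta h0 x 0 = h0"
| "lif_h uth vr beta h0 x (Suc t) =
     (let u = lif_h uth vr beta h0 x t + x (Suc t); s = hea (u - uth)
      in vr * s + beta * u * (1 - s))"

text \<open>Membrane potential u^t = h^(t-1) + x^t (meaningful for t >= 1).\<close>
definition lif_u :: "real \<Rightarrow> real \<Rightarrow> real \<Rightarrow> real \<Rightarrow> (nat \<Rightarrow> real) \<Rightarrow> nat \<Rightarrow> real" where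
  "lif_u uth vr beta h0 x t = lif_h uth vr beta h0 x (t - 1) + x t"

definition lif_s :: "real \<Rightarrow> real \<Rightarrow> real \<Rightarrow> real \<Rightarrow> (nat \<Rightarrow> real) \<Rightarrow> nat \<Rightarrow> real" where
  "lif_s uth vr beta h0 x t = hea (lif_u uth vr beta h0 x t - uth)"

definition nbhd_finite :: "(real \<Rightarrow> ennreal) \<Rightarrow> real \<Rightarrow> bool" where
  "nbhd_finite p m \<longleftrightarrow> (\<exists>e>0. (SUP x\<in>{m-e..m+e}. p x) < \<infinity>)"

end

theory Submission
  imports Defs
begin

text \<open>While the two neurons emit the same spikes, each step either resets both temporal states
  to V_reset or multiplies both membrane potentials by \<beta>; hence the distance of the membrane
  potentials obeys d(t+1) \<le> \<beta> d(t) + \<epsilon> and stays below the fixed point \<epsilon> / (1 - \<beta>).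
  Different spikes at time T therefore force u^T to lie within \<epsilon> / (1 - \<beta>) of u_th.
  A density bounded by S on [u_th - e, u_th + e] gives this event probability at most
  2 S \<epsilon> / (1 - \<beta>) when \<epsilon> / (1 - \<beta>) \<le> e; otherwise the trivial bound 1 is at most
  (\<epsilon> / (1 - \<beta>)) / e.\<close>

lemma lif_u_Suc: "lif_u uth vr \<beta> h0 x (Suc t) = lif_h uth vr \<beta> h0 x t + x (Suc t)"
  by (simp add: lif_u_def)

lemma lif_h_Suc_eq_if_spike:
  "lif_h uth vr \<beta> h0 x (Suc t) =
     (if uth \<le> lif_u uth vr \<beta> h0 x (Suc t) then vr else \<beta> * lif_u uth vr \<beta> h0 x (Suc t))"
  by (simp add: lif_u_def hea_def Let_def)

lemma lif_s_eq_iff: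
  "lif_s uth vr \<beta> h0 x t = lif_s uth vr \<beta> h0 y t \<longleftrightarrow>
     (uth \<le> lif_u uth vr \<beta> h0 x t \<longleftrightarrow> uth \<le> lif_u uth vr \<beta> h0 y t)"
  by (simp add: lif_s_def hea_def)

lemma lif_h_dist_le_if_same_spike:
  assumes "0 \<le> \<beta>" and "lif_s uth vr \<beta> h0 x (Suc t) = lif_s uth vr \<beta> h0 y (Suc t)"
  shows "\<bar>lif_h uth vr \<beta> h0 y (Suc t) - lif_h uth vr \<beta> h0 x (Suc t)\<bar>
           \<le> \<beta> * \<bar>lif_u uth vr \<beta> h0 y (Suc t) - lif_u uth vr \<beta> h0 x (Suc t)\<bar>"
  unfolding lif_h_Suc_eq_if_spike
  using assms by (auto simp: lif_s_eq_iff abs_mult simp flip: right_diff_distrib)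

lemma lif_u_dist_le:
  assumes "0 \<le> \<beta>" and "\<beta> < 1"
    and same_spikes: "\<forall>t\<in>{1..<T}. lif_s uth vr \<beta> h0 x t = lif_s uth vr \<beta> h0 y t"
    and close: "\<forall>t\<in>{1..T}. \<bar>y t - x t\<bar> \<le> \<epsilon>"
    and "1 \<le> n" and "n \<le> T"
  shows "\<bar>lif_u uth vr \<beta> h0 y n - lif_u uth vr \<beta> h0 x n\<bar> \<le> \<epsilon> / (1 - \<beta>)"
  using \<open>1 \<le> n\<close> \<open>n \<le> T\<close>
proof (induction n rule: nat_induct_at_least)
  case base
  have "\<bar>y 1 - x 1\<bar> \<le> \<epsilon>" using close base by simp
  moreover have "\<epsilon> \<le> \<epsilon> / (1 - \<beta>)"
    using \<open>\<bar>y 1 - x 1\<bar> \<le> \<epsilon>\<close> assms(1,2) by (simp add: field_simps)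
  ultimately show ?case by (simp add: lif_u_def)
next
  case (Suc n)
  then obtain k where n: "n = Suc k" by (cases n) auto
  have "\<bar>lif_h uth vr \<beta> h0 y n - lif_h uth vr \<beta> h0 x n\<bar>
          \<le> \<beta> * \<bar>lif_u uth vr \<beta> h0 y n - lif_u uth vr \<beta> h0 x n\<bar>"
    unfolding n using Suc same_spikes \<open>0 \<le> \<beta>\<close>
    by (intro lif_h_dist_le_if_same_spike) (auto simp: n)
  also have "\<dots> \<le> \<beta> * (\<epsilon> / (1 - \<beta>))"
    using Suc \<open>0 \<le> \<beta>\<close> by (intro mult_left_mono) auto
  moreover have "\<bar>y (Suc n) - x (Suc n)\<bar> \<le> \<epsilon>"
    using close Suc.prems by simp
  ultimately have "\<bar>lif_u uth vr \<beta> h0 y (Suc n) - lif_u uth vr \<beta> h0 x (Suc n)\<bar>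
                  \<le> \<beta> * (\<epsilon> / (1 - \<beta>)) + \<epsilon>"
    unfolding lif_u_Suc by linarith
  also have "\<dots> = \<epsilon> / (1 - \<beta>)"
    using \<open>\<beta> < 1\<close> by (simp add: field_simps)
  finally show ?case .
qed

lemma lif_u_near_threshold_if_spikes_differ:
  assumes "0 \<le> \<beta>" and "\<beta> < 1" and "1 \<le> T"
    and "\<forall>t\<in>{1..<T}. lif_s uth vr \<beta> h0 x t = lif_s uth vr \<beta> h0 y t"
    and "\<forall>t\<in>{1..T}. \<bar>y t - x t\<bar> \<le> \<epsilon>"
    and "lif_s uth vr \<beta> h0 x T \<noteq> lif_s uth vr \<beta> h0 y T"
  shows "lif_u uth vr \<beta> h0 x T \<in> {uth - \<epsilon> / (1 - \<beta>) .. uth + \<epsilon> / (1 - \<beta>)}"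
  using lif_u_dist_le[OF assms(1,2,4,5) \<open>1 \<le> T\<close> order_refl] assms(6)
  by (auto simp: lif_s_eq_iff)

lemma measure_spikes_differ_le_measure_near_threshold:
  assumes "prob_space M" and "0 \<le> \<beta>" and "\<beta> < 1" and "1 \<le> T"
    and u_measurable: "(\<lambda>\<omega>. lif_u uth vr \<beta> (h0 \<omega>) (\<lambda>t. xh t \<omega>) T) \<in> borel_measurable M"
    and close: "\<forall>\<omega>\<in>space M. \<forall>t\<in>{1..T}. \<bar>xt t \<omega> - xh t \<omega>\<bar> \<le> \<epsilon>"
    and same_spikes: "\<forall>\<omega>\<in>space M. \<forall>t\<in>{1..<T}.
           lif_s uth vr \<beta> (h0 \<omega>) (\<lambda>t. xh t \<omega>) t = lif_s uth vr \<beta> (h0 \<omega>) (\<lambda>t. xt t \<omega>) t"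
  shows "measure M {\<omega>\<in>space M. lif_s uth vr \<beta> (h0 \<omega>) (\<lambda>t. xh t \<omega>) T
                                \<noteq> lif_s uth vr \<beta> (h0 \<omega>) (\<lambda>t. xt t \<omega>) T}
           \<le> measure M ((\<lambda>\<omega>. lif_u uth vr \<beta> (h0 \<omega>) (\<lambda>t. xh t \<omega>) T)
                           -` {uth - \<epsilon> / (1 - \<beta>) .. uth + \<epsilon> / (1 - \<beta>)} \<inter> space M)"
    (is "measure M ?differ \<le> measure M ?near")
proof (rule finite_measure.finite_measure_mono)
  show "finite_measure M"
    using \<open>prob_space M\<close> by (rule prob_space.axioms)
  show "?near \<in> sets M"
    using u_measurable by (rule measurable_sets) simp
  show "?differ \<subseteq> ?near"
  proof (intro subsetI, elim CollectE conjE)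
    fix \<omega> assume "\<omega> \<in> space M"
      and "lif_s uth vr \<beta> (h0 \<omega>) (\<lambda>t. xh t \<omega>) T \<noteq> lif_s uth vr \<beta> (h0 \<omega>) (\<lambda>t. xt t \<omega>) T"
    with assms(2-4) close same_spikes
    have "lif_u uth vr \<beta> (h0 \<omega>) (\<lambda>t. xh t \<omega>) T \<in> {uth - \<epsilon> / (1 - \<beta>) .. uth + \<epsilon> / (1 - \<beta>)}"
      by (intro lif_u_near_threshold_if_spikes_differ) auto
    with \<open>\<omega> \<in> space M\<close> show "\<omega> \<in> ?near"
      by simp
  qed
qed

lemma distributed_measure_interval_le:
  assumes "distributed M lborel X p" and "a \<le> b" and "0 \<le> S"
    and bounded: "\<And>x. x \<in> {a..b} \<Longrightarrow> p x \<le> ennreal S"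
  shows "measure M (X -` {a..b} \<inter> space M) \<le> S * (b - a)"
proof -
  have "emeasure M (X -` {a..b} \<inter> space M) = (\<integral>\<^sup>+ x. p x * indicator {a..b} x \<partial>lborel)"
    using assms(1) by (simp add: distributed_emeasure)
  also have "\<dots> \<le> (\<integral>\<^sup>+ x. ennreal S * indicator {a..b} x \<partial>lborel)"
    using bounded by (intro nn_integral_mono) (simp split: split_indicator)
  also have "\<dots> = ennreal (S * (b - a))"
    using assms(2,3) by (simp add: nn_integral_cmult_indicator ennreal_mult)
  finally show ?thesis
    using assms(2,3) by (simp add: measure_def enn2real_leI)
qed

lemma nbhd_finite_measure_interval_linear_bound:
  assumes "nbhd_finite p m"
  obtains C where "\<And>(M::'a measure) X r. prob_space M \<Longrightarrow> distributed M lborel X p \<Longrightarrow> 0 \<le> r \<Longrightarrow>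
    measure M (X -` {m - r .. m + r} \<inter> space M) \<le> C * r"
proof -
  obtain e where "e > 0" and finite_sup: "(SUP x\<in>{m-e..m+e}. p x) < \<infinity>"
    using assms unfolding nbhd_finite_def by blast
  define S where "S = enn2real (SUP x\<in>{m-e..m+e}. p x)"
  have "0 \<le> S"
    by (simp add: S_def)
  have p_le_S: "p x \<le> ennreal S" if "x \<in> {m-e..m+e}" for x
    using SUP_upper[OF that, of p] finite_sup by (simp add: S_def)
  have "measure M (X -` {m - r .. m + r} \<inter> space M) \<le> (2 * S + 1 / e) * r"
    if "prob_space M" "distributed M lborel X p" "0 \<le> r" for M :: "'a measure" and X r
  proof (cases "r \<le> e")
    case True
    have "measure M (X -` {m - r .. m + r} \<inter> space M) \<le> S * (m + r - (m - r))"
      using True that \<open>0 \<le> S\<close> by (intro distributed_measure_interval_le) (auto intro: p_le_S)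
    also have "\<dots> \<le> (2 * S + 1 / e) * r"
      using \<open>0 \<le> r\<close> \<open>e > 0\<close> by (simp add: algebra_simps)
    finally show ?thesis .
  next
    case False
    have "measure M (X -` {m - r .. m + r} \<inter> space M) \<le> 1"
      using prob_space.prob_le_1[OF \<open>prob_space M\<close>] .
    also have "1 \<le> r / e"
      using False \<open>e > 0\<close> by simp
    also have "r / e \<le> (2 * S + 1 / e) * r"
      using \<open>0 \<le> S\<close> \<open>0 \<le> r\<close> by (simp add: algebra_simps)
    finally show ?thesis .
  qed
  then show thesis by (rule that)
qed

theorem lemma3:
  fixes p :: "real \<Rightarrow> ennreal" and u_th :: real
  assumes "nbhd_finite p u_th"
  shows "\<exists>C::real. \<forall>(M::'a measure) V_reset \<beta> (h0::'a \<Rightarrow> real)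
            (xh::nat \<Rightarrow> 'a \<Rightarrow> real) (xt::nat \<Rightarrow> 'a \<Rightarrow> real) (T::nat) (\<epsilon>::real).
     prob_space M \<and> 0 < \<beta> \<and> \<beta> < 1 \<and> 1 \<le> T
     \<and> h0 \<in> borel_measurable M
     \<and> (\<forall>t\<in>{1..T}. xh t \<in> borel_measurable M \<and> xt t \<in> borel_measurable M)
     \<and> distributed M lborel (\<lambda>\<omega>. lif_u u_th V_reset \<beta> (h0 \<omega>) (\<lambda>t. xh t \<omega>) T) p
     \<and> (\<forall>\<omega>\<in>space M. \<forall>t\<in>{1..T}. \<bar>xt t \<omega> - xh t \<omega>\<bar> \<le> \<epsilon>)
     \<and> (\<forall>\<omega>\<in>space M. \<forall>t\<in>{1..<T}.
           lif_s u_th V_reset \<beta> (h0 \<omega>) (\<lambda>t. xh t \<omega>) t = lif_s u_th V_reset \<beta> (h0 \<omega>) (\<lambda>t. xt t \<omega>) t)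
     \<longrightarrow> measure M {\<omega>\<in>space M. lif_s u_th V_reset \<beta> (h0 \<omega>) (\<lambda>t. xh t \<omega>) T
                                   \<noteq> lif_s u_th V_reset \<beta> (h0 \<omega>) (\<lambda>t. xt t \<omega>) T}
         \<le> C * \<epsilon> / (1 - \<beta>)"
proof -
  obtain C where C: "\<And>(M::'a measure) X r. prob_space M \<Longrightarrow> distributed M lborel X p \<Longrightarrow>
      0 \<le> r \<Longrightarrow> measure M (X -` {u_th - r .. u_th + r} \<inter> space M) \<le> C * r"
    using nbhd_finite_measure_interval_linear_bound[OF assms] by blast
  show ?thesis
  proof (rule exI[of _ C], intro allI impI, elim conjE)
    fix M :: "'a measure" and V_reset \<beta> and h0 :: "'a \<Rightarrow> real"
      and xh xt :: "nat \<Rightarrow> 'a \<Rightarrow> real" and T :: nat and \<epsilon> :: real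
    let ?r = "\<epsilon> / (1 - \<beta>)"
    assume "prob_space M" "0 < \<beta>" "\<beta> < 1" "1 \<le> T"
      and dist: "distributed M lborel (\<lambda>\<omega>. lif_u u_th V_reset \<beta> (h0 \<omega>) (\<lambda>t. xh t \<omega>) T) p"
      and close: "\<forall>\<omega>\<in>space M. \<forall>t\<in>{1..T}. \<bar>xt t \<omega> - xh t \<omega>\<bar> \<le> \<epsilon>"
      and same_spikes: "\<forall>\<omega>\<in>space M. \<forall>t\<in>{1..<T}.
           lif_s u_th V_reset \<beta> (h0 \<omega>) (\<lambda>t. xh t \<omega>) t = lif_s u_th V_reset \<beta> (h0 \<omega>) (\<lambda>t. xt t \<omega>) t"
    obtain \<omega>\<^sub>0 where "\<omega>\<^sub>0 \<in> space M"
      using prob_space.not_empty[OF \<open>prob_space M\<close>] by blast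
    then have "0 \<le> \<epsilon>"
      using close \<open>1 \<le> T\<close> by fastforce
    then have "0 \<le> ?r"
      using \<open>\<beta> < 1\<close> by simp
    note near_threshold = measure_spikes_differ_le_measure_near_threshold
      [OF \<open>prob_space M\<close> less_imp_le[OF \<open>0 < \<beta>\<close>] \<open>\<beta> < 1\<close> \<open>1 \<le> T\<close>
          distributed_measurable[OF dist, unfolded measurable_lborel1] close same_spikes]
    show "measure M {\<omega>\<in>space M. lif_s u_th V_reset \<beta> (h0 \<omega>) (\<lambda>t. xh t \<omega>) T
                                \<noteq> lif_s u_th V_reset \<beta> (h0 \<omega>) (\<lambda>t. xt t \<omega>) T} \<le> C * \<epsilon> / (1 - \<beta>)"
      using order.trans[OF near_threshold C[OF \<open>prob_space M\<close> dist \<open>0 \<le> ?r\<close>]] by simp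
  qed
qed

end
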